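(* Let $R$ be a discrete valuation ring with field of fractions $K$ and uniformizer $\pi$, $V$ a finite-dimensional $K$-vector space, and $B$ a nondegenerate $K$-bilinear form on $V$ with $B(x,y)=\epsilon B(y,x)$ for all $x,y$, where $\epsilon=\pm1$. Let $L$ be a lattice of $V$ and $L'$ its dual lattice. Then $m_-(L,L')$ is an almost self-dual lattice, and its dual lattice is $m_+(L,L')$.
   Context: A lattice of $V$ is a free $R$-submodule $L$ with $K\otimes_R L\to V$ an isomorphism. The dual of a lattice $L$ is $L'=\{x\in V: B(x,y)\in R\ \forall y\in L\}$. A lattice $L$ is almost self-dual if $\pi L'\subset L\subset L'$. $m_-(L,M)=\sum_{n\in\mathbb Z}(\pi^nL\cap\pi^{-n}M)$ (submodule generated) and $m_+(L,M)=\bigcap_{n\in\mathbb Z}(\pi^nL+\pi^{-n}M)$. *)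

theory Defs
  imports Main "HOL.Vector_Spaces"
begin

text \<open>K is the type 'k (a field); R is a subset of K.\<close>

definition subring_of :: "'k::field set \<Rightarrow> bool" where
  "subring_of R \<longleftrightarrow> 0 \<in> R \<and> 1 \<in> R \<and> (\<forall>x\<in>R. \<forall>y\<in>R. x + y \<in> R \<and> x * y \<in> R) \<and> (\<forall>x\<in>R. - x \<in> R)"

definition unit_in :: "'k::field set \<Rightarrow> 'k \<Rightarrow> bool" where
  "unit_in R x \<longleftrightarrow> x \<in> R \<and> x \<noteq> 0 \<and> inverse x \<in> R"

definition ideal_in :: "'k::field set \<Rightarrow> 'k set \<Rightarrow> bool" where
  "ideal_in R I \<longleftrightarrow> I \<subseteq> R \<and> 0 \<in> I \<and> (\<forall>x\<in>I. \<forall>y\<in>I. x + y \<in> I) \<and> (\<forall>r\<in>R. \<forall>x\<in>I. r * x \<in> I)"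

text \<open>A DVR: a local principal ideal domain that is not a field
  (local = the non-units form an ideal).\<close>
definition dvr :: "'k::field set \<Rightarrow> bool" where
  "dvr R \<longleftrightarrow> subring_of R
     \<and> (\<forall>I. ideal_in R I \<longrightarrow> (\<exists>a\<in>R. I = (\<lambda>r. a * r) ` R))
     \<and> ideal_in R {x \<in> R. \<not> unit_in R x}
     \<and> (\<exists>x\<in>R. x \<noteq> 0 \<and> \<not> unit_in R x)"

definition fraction_field_is_UNIV :: "'k::field set \<Rightarrow> bool" where
  "fraction_field_is_UNIV R \<longleftrightarrow> (\<forall>x::'k. \<exists>a\<in>R. \<exists>b\<in>R. b \<noteq> 0 \<and> x = a / b)"

definition uniformizer :: "'k::field set \<Rightarrow> 'k \<Rightarrow> bool" where
  "uniformizer R p \<longleftrightarrow> p \<in> R \<and> p \<noteq> 0 \<and> {x \<in> R. \<not> unit_in R x} = (\<lambda>r. p * r) ` R"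

definition bilinear_form :: "('k::field \<Rightarrow> 'v::ab_group_add \<Rightarrow> 'v) \<Rightarrow> ('v \<Rightarrow> 'v \<Rightarrow> 'k) \<Rightarrow> bool" where
  "bilinear_form scale B \<longleftrightarrow>
     (\<forall>x y z. B (x + y) z = B x z + B y z \<and> B x (y + z) = B x y + B x z)
   \<and> (\<forall>c x y. B (scale c x) y = c * B x y \<and> B x (scale c y) = c * B x y)"

definition nondegenerate :: "('v::ab_group_add \<Rightarrow> 'v \<Rightarrow> 'k::field) \<Rightarrow> bool" where
  "nondegenerate B \<longleftrightarrow> (\<forall>x. (\<forall>y. B x y = 0) \<longrightarrow> x = 0) \<and> (\<forall>y. (\<forall>x. B x y = 0) \<longrightarrow> y = 0)"

definition Rspan :: "('k::field \<Rightarrow> 'v::ab_group_add \<Rightarrow> 'v) \<Rightarrow> 'k set \<Rightarrow> 'v set \<Rightarrow> 'v set" where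
  "Rspan scale R S = {(\<Sum>b\<in>T. scale (c b) b) | T c. finite T \<and> T \<subseteq> S \<and> (\<forall>b\<in>T. c b \<in> R)}"

text \<open>A lattice: a free R-submodule L whose R-basis is (via K \<otimes>_R L \<cong> V) a K-basis of V.\<close>
definition is_lattice :: "('k::field \<Rightarrow> 'v::ab_group_add \<Rightarrow> 'v) \<Rightarrow> 'k set \<Rightarrow> 'v set \<Rightarrow> bool" where
  "is_lattice scale R L \<longleftrightarrow> (\<exists>Bs. finite Bs \<and> \<not> module.dependent scale Bs
       \<and> module.span scale Bs = UNIV \<and> L = Rspan scale R Bs)"

definition dual_lattice :: "('v \<Rightarrow> 'v \<Rightarrow> 'k::field) \<Rightarrow> 'k set \<Rightarrow> 'v set \<Rightarrow> 'v set" where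
  "dual_lattice B R L = {x. \<forall>y\<in>L. B x y \<in> R}"

definition almost_self_dual ::
  "('k::field \<Rightarrow> 'v::ab_group_add \<Rightarrow> 'v) \<Rightarrow> ('v \<Rightarrow> 'v \<Rightarrow> 'k) \<Rightarrow> 'k set \<Rightarrow> 'k \<Rightarrow> 'v set \<Rightarrow> bool" where
  "almost_self_dual scale B R p L \<longleftrightarrow> is_lattice scale R L
     \<and> scale p ` dual_lattice B R L \<subseteq> L \<and> L \<subseteq> dual_lattice B R L"

definition m_minus :: "('k::field \<Rightarrow> 'v::ab_group_add \<Rightarrow> 'v) \<Rightarrow> 'k set \<Rightarrow> 'k \<Rightarrow> 'v set \<Rightarrow> 'v set \<Rightarrow> 'v set" where
  "m_minus scale R p L M = Rspan scale R (\<Union>n::int. scale (p powi n) ` L \<inter> scale (p powi (- n)) ` M)"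

definition m_plus :: "('k::field \<Rightarrow> 'v::ab_group_add \<Rightarrow> 'v) \<Rightarrow> 'k \<Rightarrow> 'v set \<Rightarrow> 'v set \<Rightarrow> 'v set" where
  "m_plus scale p L M = (\<Inter>n::int. {a + b | a b. a \<in> scale (p powi n) ` L \<and> b \<in> scale (p powi (- n)) ` M})"

end

theory Submission
  imports Defs
begin

text \<open>Put \<open>N = L'\<close> and \<open>G n = \<pi>^n L \<inter> \<pi>^-n N\<close>, so \<open>m_-(L, N)\<close> is spanned by the \<open>G n\<close>
  and \<open>m_+(L, N)\<close> is the intersection of the lattices \<open>Y n = \<pi>^n L + \<pi>^-n N\<close>. As \<open>B\<close> is
  integral on \<open>L \<times> N\<close>, each \<open>G n\<close> pairs integrally with every \<open>G m\<close> and with \<open>Y n\<close>; hence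
  \<open>m_- \<subseteq> m_-'\<close> and \<open>m_+ \<subseteq> m_-'\<close>. Conversely \<open>Y n' = G n\<close>, so biduality of lattices gives
  \<open>m_-' \<subseteq> G n' = Y n\<close> for all \<open>n\<close>. Finally \<open>\<pi> m_+ \<subseteq> m_-\<close> by a telescoping argument, and
  \<open>m_-\<close> is a lattice because it is squeezed between \<open>\<pi>^d L\<close> and \<open>\<pi>^-d L\<close> for some \<open>d\<close>.\<close>

lemma finite_uniform_bound:
  assumes "finite S" and "\<forall>s\<in>S. \<exists>c::nat. P c s" and "\<And>c c' s. P c s \<Longrightarrow> c \<le> c' \<Longrightarrow> P c' s"
  shows "\<exists>c. \<forall>s\<in>S. P c s"
  using assms(1,2)
proof (induction S rule: finite_induct)
  case empty
  then show ?case by simp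
next
  case (insert a S)
  then obtain n where n: "\<forall>x\<in>S. P n x" by blast
  obtain m where m: "P m a" using insert by blast
  show ?case
    by (rule exI[of _ "n + m"]) (use n m assms(3) in \<open>auto intro: le_add1 le_add2\<close>)
qed

locale dvr_fraction_field =
  fixes R :: "'k::field set" and p :: 'k
  assumes dvr: "dvr R" and fraction_field: "fraction_field_is_UNIV R"
    and uniformizer: "uniformizer R p"
begin

lemma subring: "subring_of R"
  using dvr by (simp add: dvr_def)

lemma zero_in_R [simp]: "0 \<in> R"
  using subring by (simp add: subring_of_def)

lemma one_in_R [simp]: "1 \<in> R"
  using subring by (simp add: subring_of_def)

lemma add_in_R [intro]: "x \<in> R \<Longrightarrow> y \<in> R \<Longrightarrow> x + y \<in> R"
  using subring by (simp add: subring_of_def)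

lemma mult_in_R [intro]: "x \<in> R \<Longrightarrow> y \<in> R \<Longrightarrow> x * y \<in> R"
  using subring by (simp add: subring_of_def)

lemma uminus_in_R [intro]: "x \<in> R \<Longrightarrow> - x \<in> R"
  using subring by (simp add: subring_of_def)

lemma power_in_R [intro]: "x \<in> R \<Longrightarrow> x ^ n \<in> R"
  by (induction n) auto

lemma sum_in_R [intro]: "(\<And>i. i \<in> S \<Longrightarrow> f i \<in> R) \<Longrightarrow> sum f S \<in> R"
  by (induction S rule: infinite_finite_induct) auto

lemma uniformizer_in_R [simp]: "p \<in> R"
  using uniformizer by (simp add: uniformizer_def)

lemma uniformizer_nonzero [simp]: "p \<noteq> 0"
  using uniformizer by (simp add: uniformizer_def)

lemma power_int_uniformizer_in_R [intro]: "0 \<le> n \<Longrightarrow> p powi n \<in> R"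
  by (metis nonneg_eq_int power_in_R power_int_of_nat uniformizer_in_R)

lemma principal_ideal: "ideal_in R I \<Longrightarrow> \<exists>a\<in>R. I = (\<lambda>r. a * r) ` R"
  using dvr by (simp add: dvr_def)

lemma nonunits_eq_uniformizer_multiples: "{x \<in> R. \<not> unit_in R x} = (\<lambda>r. p * r) ` R"
  using uniformizer by (simp add: uniformizer_def)

lemma uniformizer_not_unit: "\<not> unit_in R p"
proof -
  have "p \<in> (\<lambda>r. p * r) ` R"
    by (metis one_in_R image_eqI mult_1_right)
  then show ?thesis
    using nonunits_eq_uniformizer_multiples by blast
qed

lemma ideal_of_quotients_by_powers:
  assumes div: "\<And>n. r / p ^ n \<in> R"
  shows "ideal_in R {x. \<exists>n. \<exists>s\<in>R. x = r / p ^ n * s}" (is "ideal_in R ?I")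
  unfolding ideal_in_def
proof (intro conjI ballI)
  show "?I \<subseteq> R"
    using div mult_in_R by fastforce
  show "0 \<in> ?I"
    by (intro CollectI exI[of _ 0] bexI[of _ 0]) auto
next
  fix x y assume "x \<in> ?I" "y \<in> ?I"
  then obtain n s m t where st: "s \<in> R" "x = r / p ^ n * s" "t \<in> R" "y = r / p ^ m * t"
    by blast
  have shift: "r / p ^ k = r / p ^ (k + j) * p ^ j" for k j
    by (simp add: power_add)
  have "x + y = r / p ^ (n + m) * (p ^ m * s + p ^ n * t)"
    using st shift[of n m] shift[of m n] by (simp add: algebra_simps)
  moreover have "p ^ m * s + p ^ n * t \<in> R"
    using st by (intro add_in_R mult_in_R power_in_R uniformizer_in_R)
  ultimately show "x + y \<in> ?I"
    by blast
next
  fix a x assume "a \<in> R" "x \<in> ?I"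
  then obtain n s where "s \<in> R" "x = r / p ^ n * s"
    by blast
  then show "a * x \<in> ?I"
    using \<open>a \<in> R\<close> by (intro CollectI exI[of _ n] bexI[of _ "a * s"]) auto
qed

text \<open>Krull's intersection theorem for \<open>R\<close>: the ideal generated by all \<open>r / \<pi>^n\<close> is principal,
  and comparing its generator with the next quotient would make \<open>\<pi>\<close> a unit.\<close>

lemma infinitely_divisible_eq_zero:
  assumes div: "\<And>n. r / p ^ n \<in> R"
  shows "r = 0"
proof (rule ccontr)
  assume "r \<noteq> 0"
  let ?I = "{x. \<exists>n. \<exists>s\<in>R. x = r / p ^ n * s}"
  obtain a where a: "?I = (\<lambda>x. a * x) ` R"
    using principal_ideal[OF ideal_of_quotients_by_powers[OF div]] by blast
  have "a \<in> ?I"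
    unfolding a by (rule image_eqI[of _ _ 1]) simp_all
  then obtain n s where s: "s \<in> R" "a = r / p ^ n * s"
    by blast
  have "r / p ^ Suc n \<in> ?I"
    by (intro CollectI exI[of _ "Suc n"] bexI[of _ 1]) auto
  then obtain t where t: "t \<in> R" "r / p ^ Suc n = a * t"
    unfolding a by blast
  then have "inverse p = s * t"
    using s \<open>r \<noteq> 0\<close> by (simp add: field_simps)
  then have "unit_in R p"
    unfolding unit_in_def using s t by auto
  then show False
    using uniformizer_not_unit by simp
qed

lemma nonzero_eq_unit_mult_power:
  assumes r: "r \<in> R" "r \<noteq> 0"
  shows "\<exists>n u. unit_in R u \<and> r = u * p ^ n"
proof (rule ccontr)
  assume no_unit: "\<not> (\<exists>n u. unit_in R u \<and> r = u * p ^ n)"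
  have "r / p ^ n \<in> R" for n
  proof (induction n)
    case 0
    then show ?case using r by simp
  next
    case (Suc n)
    have "r = r / p ^ n * p ^ n"
      by simp
    then have "\<not> unit_in R (r / p ^ n)"
      using no_unit by blast
    then have "r / p ^ n \<in> (\<lambda>r. p * r) ` R"
      using Suc nonunits_eq_uniformizer_multiples by blast
    then obtain t where "t \<in> R" "r / p ^ n = p * t"
      by blast
    then have "r / p ^ Suc n = t"
      by (simp add: field_simps)
    then show ?case
      using \<open>t \<in> R\<close> by simp
  qed
  then have "r = 0"
    by (rule infinitely_divisible_eq_zero)
  with r show False
    by simp
qed

lemma exists_power_mult_in_R: "\<exists>n. p ^ n * x \<in> R"
proof -
  obtain a b where ab: "a \<in> R" "b \<in> R" "b \<noteq> 0" "x = a / b"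
    using fraction_field unfolding fraction_field_is_UNIV_def by blast
  obtain n u where u: "unit_in R u" "b = u * p ^ n"
    using nonzero_eq_unit_mult_power ab by blast
  have "p ^ n * x = a * inverse u"
    using ab u by (simp add: field_simps unit_in_def)
  moreover have "a * inverse u \<in> R"
    using ab u unfolding unit_in_def by auto
  ultimately show ?thesis
    by metis
qed

lemma power_mult_in_R_mono:
  assumes "p ^ n * x \<in> R" and "n \<le> m"
  shows "p ^ m * x \<in> R"
proof -
  have "p ^ (m - n) * (p ^ n * x) \<in> R"
    using assms(1) mult_in_R power_in_R uniformizer_in_R by blast
  then show ?thesis
    using assms(2) by (simp add: mult.assoc[symmetric] power_add[symmetric])
qed

lemma uniform_power_mult_in_R: "finite S \<Longrightarrow> \<exists>n. \<forall>s\<in>S. p ^ n * f s \<in> R"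
  using finite_uniform_bound[of S "\<lambda>n s. p ^ n * f s \<in> R"]
    exists_power_mult_in_R power_mult_in_R_mono by blast

lemma fractional_ideal_principal:
  assumes "0 \<in> I" and "\<forall>x\<in>I. \<forall>y\<in>I. x + y \<in> I" and "\<forall>r\<in>R. \<forall>x\<in>I. r * x \<in> I"
    and "\<forall>x\<in>I. c * x \<in> R" and "c \<noteq> 0"
  shows "\<exists>g. I = (\<lambda>r. g * r) ` R"
proof -
  have "ideal_in R ((\<lambda>x. c * x) ` I)"
    unfolding ideal_in_def
  proof (intro conjI ballI)
    show "(\<lambda>x. c * x) ` I \<subseteq> R" and "0 \<in> (\<lambda>x. c * x) ` I"
      using assms(1,4) by force+
  next
    fix x y assume "x \<in> (\<lambda>x. c * x) ` I" "y \<in> (\<lambda>x. c * x) ` I"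
    then show "x + y \<in> (\<lambda>x. c * x) ` I"
      using assms(2) by (auto simp: distrib_left[symmetric])
  next
    fix r x assume "r \<in> R" "x \<in> (\<lambda>x. c * x) ` I"
    then show "r * x \<in> (\<lambda>x. c * x) ` I"
      using assms(3) by (auto simp: mult.left_commute)
  qed
  then obtain a where a: "(\<lambda>x. c * x) ` I = (\<lambda>x. a * x) ` R"
    using principal_ideal by blast
  have "I = (\<lambda>x. inverse c * x) ` ((\<lambda>x. c * x) ` I)"
    using assms(5) by (simp add: image_image mult.assoc[symmetric])
  also have "\<dots> = (\<lambda>r. a / c * r) ` R"
    unfolding a image_image by (simp add: field_simps)
  finally show ?thesis
    by blast
qed

end

definition R_submodule :: "('k::field \<Rightarrow> 'v::ab_group_add \<Rightarrow> 'v) \<Rightarrow> 'k set \<Rightarrow> 'v set \<Rightarrow> bool" where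
  "R_submodule scale R X \<longleftrightarrow>
     0 \<in> X \<and> (\<forall>x\<in>X. \<forall>y\<in>X. x + y \<in> X) \<and> (\<forall>r\<in>R. \<forall>x\<in>X. scale r x \<in> X)"

locale dvr_vector_space = dvr_fraction_field R p + vector_space scale
  for R :: "'k::field set" and p :: 'k and scale :: "'k \<Rightarrow> 'v::ab_group_add \<Rightarrow> 'v"
begin

notation scale (infixr \<open>*s\<close> 75)

abbreviation pmul :: "int \<Rightarrow> 'v set \<Rightarrow> 'v set" where
  "pmul n X \<equiv> scale (p powi n) ` X"

lemma submodule_zero: "R_submodule scale R X \<Longrightarrow> 0 \<in> X"
  by (simp add: R_submodule_def)

lemma submodule_add: "R_submodule scale R X \<Longrightarrow> x \<in> X \<Longrightarrow> y \<in> X \<Longrightarrow> x + y \<in> X"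
  by (simp add: R_submodule_def)

lemma submodule_scale: "R_submodule scale R X \<Longrightarrow> r \<in> R \<Longrightarrow> x \<in> X \<Longrightarrow> r *s x \<in> X"
  by (simp add: R_submodule_def)

lemma submodule_diff: "R_submodule scale R X \<Longrightarrow> x \<in> X \<Longrightarrow> y \<in> X \<Longrightarrow> x - y \<in> X"
  using submodule_add[of X x "- y"] submodule_scale[of X "- 1" y] uminus_in_R[OF one_in_R] by simp

lemma submodule_sum: "R_submodule scale R X \<Longrightarrow> (\<And>i. i \<in> T \<Longrightarrow> f i \<in> X) \<Longrightarrow> sum f T \<in> X"
  by (induction T rule: infinite_finite_induct) (auto simp: submodule_zero submodule_add)

lemma submodule_Rspan: "R_submodule scale R (Rspan scale R S)"
  unfolding R_submodule_def
proof (intro conjI ballI)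
  show "0 \<in> Rspan scale R S"
    unfolding Rspan_def by (intro CollectI exI[of _ "{}"]) auto
next
  fix x y assume "x \<in> Rspan scale R S" "y \<in> Rspan scale R S"
  then obtain T1 c1 T2 c2
    where T1: "finite T1" "T1 \<subseteq> S" "\<forall>b\<in>T1. c1 b \<in> R" "x = (\<Sum>b\<in>T1. c1 b *s b)"
      and T2: "finite T2" "T2 \<subseteq> S" "\<forall>b\<in>T2. c2 b \<in> R" "y = (\<Sum>b\<in>T2. c2 b *s b)"
    unfolding Rspan_def by blast
  define d1 where "d1 b = (if b \<in> T1 then c1 b else 0)" for b
  define d2 where "d2 b = (if b \<in> T2 then c2 b else 0)" for b
  have "x = (\<Sum>b\<in>T1 \<union> T2. d1 b *s b)"
    unfolding T1(4) d1_def using T1 T2 by (intro sum.mono_neutral_cong_left) auto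
  moreover have "y = (\<Sum>b\<in>T1 \<union> T2. d2 b *s b)"
    unfolding T2(4) d2_def using T1 T2 by (intro sum.mono_neutral_cong_left) auto
  ultimately have "x + y = (\<Sum>b\<in>T1 \<union> T2. (d1 b + d2 b) *s b)"
    by (simp add: scale_left_distrib sum.distrib)
  moreover have "\<forall>b\<in>T1 \<union> T2. d1 b + d2 b \<in> R"
    using T1 T2 unfolding d1_def d2_def by auto
  ultimately show "x + y \<in> Rspan scale R S"
    unfolding Rspan_def using T1 T2
    by (intro CollectI exI[of _ "T1 \<union> T2"] exI[of _ "\<lambda>b. d1 b + d2 b"]) auto
next
  fix r x assume "r \<in> R" "x \<in> Rspan scale R S"
  then obtain T c where T: "finite T" "T \<subseteq> S" "\<forall>b\<in>T. c b \<in> R" "x = (\<Sum>b\<in>T. c b *s b)"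
    unfolding Rspan_def by blast
  have "r *s x = (\<Sum>b\<in>T. (r * c b) *s b)"
    unfolding T(4) by (simp add: scale_sum_right)
  then show "r *s x \<in> Rspan scale R S"
    unfolding Rspan_def using T \<open>r \<in> R\<close>
    by (intro CollectI exI[of _ T] exI[of _ "\<lambda>b. r * c b"]) auto
qed

lemma Rspan_least: "R_submodule scale R X \<Longrightarrow> S \<subseteq> X \<Longrightarrow> Rspan scale R S \<subseteq> X"
  unfolding Rspan_def by (auto intro!: submodule_sum submodule_scale)

lemma Rspan_base: "x \<in> S \<Longrightarrow> x \<in> Rspan scale R S"
  unfolding Rspan_def by (intro CollectI exI[of _ "{x}"] exI[of _ "\<lambda>_. 1"]) auto

lemma Rspan_mono: "S \<subseteq> T \<Longrightarrow> Rspan scale R S \<subseteq> Rspan scale R T"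
  by (meson Rspan_base Rspan_least submodule_Rspan subset_iff)

lemma Rspan_empty: "Rspan scale R {} = {0}"
  unfolding Rspan_def by auto

lemma submodule_set_plus:
  assumes "R_submodule scale R X" and "R_submodule scale R Z"
  shows "R_submodule scale R {a + b |a b. a \<in> X \<and> b \<in> Z}" (is "R_submodule scale R ?Y")
  unfolding R_submodule_def
proof (intro conjI ballI)
  show "0 \<in> ?Y"
    using assms submodule_zero by force
next
  fix x y assume "x \<in> ?Y" "y \<in> ?Y"
  then obtain a b a' b' where "a \<in> X" "b \<in> Z" "a' \<in> X" "b' \<in> Z" "x = a + b" "y = a' + b'"
    by blast
  moreover have "x + y = (a + a') + (b + b')"
    using calculation by (simp add: algebra_simps)
  ultimately show "x + y \<in> ?Y"
    using assms submodule_add by blast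
next
  fix r x assume "r \<in> R" "x \<in> ?Y"
  then obtain a b where "a \<in> X" "b \<in> Z" "x = a + b"
    by blast
  moreover have "r *s x = r *s a + r *s b"
    using calculation by (simp add: scale_right_distrib)
  ultimately show "r *s x \<in> ?Y"
    using assms submodule_scale \<open>r \<in> R\<close> by blast
qed

lemma pmul_iff: "y \<in> pmul n X \<longleftrightarrow> p powi (- n) *s y \<in> X"
proof
  assume "y \<in> pmul n X"
  then show "p powi (- n) *s y \<in> X"
    by (auto simp: power_int_minus)
next
  assume "p powi (- n) *s y \<in> X"
  moreover have "y = p powi n *s p powi (- n) *s y"
    by (simp add: power_int_minus)
  ultimately show "y \<in> pmul n X"
    by blast
qed

lemma pmul_pmul: "pmul m (pmul n X) = pmul (m + n) X"
  by (simp add: image_image power_int_add)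

lemma pmul_antimono:
  assumes "R_submodule scale R X" and "m \<le> n"
  shows "pmul n X \<subseteq> pmul m X"
proof
  fix y assume "y \<in> pmul n X"
  then obtain x where x: "x \<in> X" "y = p powi n *s x"
    by blast
  have "p powi (n - m) \<in> R"
    using assms(2) by auto
  then have "p powi (n - m) *s x \<in> X"
    using assms(1) x submodule_scale by blast
  moreover have "y = p powi m *s p powi (n - m) *s x"
    using x by (simp add: power_int_add[symmetric])
  ultimately show "y \<in> pmul m X"
    by blast
qed

lemma submodule_pmul: "R_submodule scale R X \<Longrightarrow> R_submodule scale R (pmul n X)"
  unfolding R_submodule_def
proof (intro conjI ballI)
  assume X: "0 \<in> X \<and> (\<forall>x\<in>X. \<forall>y\<in>X. x + y \<in> X) \<and> (\<forall>r\<in>R. \<forall>x\<in>X. r *s x \<in> X)"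
  show "0 \<in> pmul n X"
    using X by (metis image_eqI scale_zero_right)
  fix x y assume "x \<in> pmul n X" "y \<in> pmul n X"
  then show "x + y \<in> pmul n X"
    using X by (auto simp: scale_right_distrib[symmetric])
next
  assume X: "0 \<in> X \<and> (\<forall>x\<in>X. \<forall>y\<in>X. x + y \<in> X) \<and> (\<forall>r\<in>R. \<forall>x\<in>X. r *s x \<in> X)"
  fix r x assume "r \<in> R" "x \<in> pmul n X"
  then obtain y where "y \<in> X" "x = p powi n *s y"
    by blast
  then have "r *s x = p powi n *s r *s y"
    by (simp add: mult.commute)
  then show "r *s x \<in> pmul n X"
    using X \<open>r \<in> R\<close> \<open>y \<in> X\<close> by blast
qed

lemma pmul_mono: "X \<subseteq> Y \<Longrightarrow> pmul n X \<subseteq> pmul n Y"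
  by (rule image_mono)

lemma pmul_subset_iff: "pmul n X \<subseteq> Y \<longleftrightarrow> X \<subseteq> pmul (- n) Y"
proof
  assume "pmul n X \<subseteq> Y"
  then have "pmul (- n) (pmul n X) \<subseteq> pmul (- n) Y"
    by (rule pmul_mono)
  then show "X \<subseteq> pmul (- n) Y"
    by (simp add: pmul_pmul)
next
  assume "X \<subseteq> pmul (- n) Y"
  then have "pmul n X \<subseteq> pmul n (pmul (- n) Y)"
    by (rule pmul_mono)
  then show "pmul n X \<subseteq> Y"
    by (simp add: pmul_pmul)
qed

lemma pmul_set_plus_subset:
  assumes Z: "R_submodule scale R Z" and "pmul n X \<subseteq> Z" and "pmul n Y \<subseteq> Z"
  shows "pmul n {a + b |a b. a \<in> X \<and> b \<in> Y} \<subseteq> Z"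
proof
  fix z assume "z \<in> pmul n {a + b |a b. a \<in> X \<and> b \<in> Y}"
  then obtain a b where "a \<in> X" "b \<in> Y" "z = p powi n *s a + p powi n *s b"
    by (auto simp: scale_right_distrib)
  then show "z \<in> Z"
    using assms by (blast intro: submodule_add[OF Z])
qed

lemma scale_uniformizer_pmul: "y \<in> pmul n X \<Longrightarrow> p *s y \<in> pmul (n + 1) X"
  by (auto simp: power_int_add mult.commute)

lemma m_plus_iff: "x \<in> m_plus scale p L N \<longleftrightarrow> (\<forall>n. \<exists>a\<in>pmul n L. x - a \<in> pmul (- n) N)"
proof -
  have "(\<exists>a b. x = a + b \<and> a \<in> P \<and> b \<in> Q) \<longleftrightarrow> (\<exists>a\<in>P. x - a \<in> Q)" for P Q
  proof
    assume "\<exists>a b. x = a + b \<and> a \<in> P \<and> b \<in> Q"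
    then obtain a b where "x = a + b" "a \<in> P" "b \<in> Q"
      by blast
    then show "\<exists>a\<in>P. x - a \<in> Q"
      by (intro bexI[of _ a]) simp_all
  next
    assume "\<exists>a\<in>P. x - a \<in> Q"
    then obtain a where "a \<in> P" "x - a \<in> Q"
      by blast
    then show "\<exists>a b. x = a + b \<and> a \<in> P \<and> b \<in> Q"
      by (intro exI[of _ a] exI[of _ "x - a"]) simp
  qed
  then show ?thesis
    unfolding m_plus_def by simp
qed

lemma submodule_m_minus: "R_submodule scale R (m_minus scale R p L N)"
  unfolding m_minus_def by (rule submodule_Rspan)

lemma mem_m_minus: "y \<in> pmul n L \<Longrightarrow> y \<in> pmul (- n) N \<Longrightarrow> y \<in> m_minus scale R p L N"
  unfolding m_minus_def by (rule Rspan_base) blast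

lemma scale_uniformizer_mem_m_minus:
  assumes N: "R_submodule scale R N" and y: "y \<in> pmul n L" "y \<in> pmul (- (n + 1)) N"
  shows "p *s y \<in> m_minus scale R p L N"
proof (rule mem_m_minus)
  show "p *s y \<in> pmul (n + 1) L"
    using y(1) by (rule scale_uniformizer_pmul)
  show "p *s y \<in> pmul (- (n + 1)) N"
    using submodule_scale[OF submodule_pmul[OF N] uniformizer_in_R y(2)] .
qed

text \<open>Write \<open>x = A n + (x - A n)\<close> with \<open>A n \<in> \<pi>^n L\<close> and \<open>x - A n \<in> \<pi>^-n N\<close> for all \<open>n\<close>.
  The difference \<open>A n - A (n + 1)\<close> lies in \<open>\<pi>^n L \<inter> \<pi>^-(n+1) N\<close>, so \<open>\<pi>\<close> times it is a
  generator of \<open>m_-(L, N)\<close>. Telescoping from an index where \<open>x - A n\<close> is a generator (as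
  \<open>x \<in> \<pi>^n L\<close>) to one where \<open>A n\<close> is a generator (as \<open>x \<in> \<pi>^-n N\<close>) puts \<open>\<pi> x\<close>
  into \<open>m_-(L, N)\<close>.\<close>

lemma scale_uniformizer_telescope_mem_m_minus:
  assumes L: "R_submodule scale R L" and N: "R_submodule scale R N"
    and A: "\<And>n. A n \<in> pmul n L" "\<And>n. x - A n \<in> pmul (- n) N"
    and x: "x \<in> pmul n0 L" and n: "n0 \<le> n"
  shows "p *s (x - A n) \<in> m_minus scale R p L N"
  using n
proof (induction n rule: int_ge_induct)
  case base
  have "x - A n0 \<in> pmul n0 L"
    using submodule_diff[OF submodule_pmul[OF L] x A(1)] .
  then have "x - A n0 \<in> m_minus scale R p L N"
    using A(2) by (rule mem_m_minus)
  then show ?case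
    using submodule_scale[OF submodule_m_minus] by simp
next
  case (step n)
  have "A (n + 1) \<in> pmul n L"
    using pmul_antimono[OF L, of n "n + 1"] A(1) by auto
  then have "A n - A (n + 1) \<in> pmul n L"
    using submodule_diff[OF submodule_pmul[OF L] A(1)] by blast
  moreover have "x - A n \<in> pmul (- (n + 1)) N"
    using pmul_antimono[OF N, of "- (n + 1)" "- n"] A(2) by auto
  then have "(x - A (n + 1)) - (x - A n) \<in> pmul (- (n + 1)) N"
    using submodule_diff[OF submodule_pmul[OF N] A(2)] by blast
  ultimately have "p *s (A n - A (n + 1)) \<in> m_minus scale R p L N"
    by (intro scale_uniformizer_mem_m_minus[OF N]) simp_all
  then have "p *s (x - A n) + p *s (A n - A (n + 1)) \<in> m_minus scale R p L N"
    using step.IH submodule_add[OF submodule_m_minus] by blast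
  then show ?case
    by (simp add: scale_right_distrib[symmetric])
qed

lemma scale_uniformizer_m_plus_mem_m_minus:
  assumes L: "R_submodule scale R L" and N: "R_submodule scale R N"
    and x: "x \<in> m_plus scale p L N" "x \<in> pmul n0 L" "x \<in> pmul m N"
  shows "p *s x \<in> m_minus scale R p L N"
proof -
  let ?M = "m_minus scale R p L N"
  have "\<forall>n. \<exists>a. a \<in> pmul n L \<and> x - a \<in> pmul (- n) N"
    using x(1) unfolding m_plus_iff by blast
  from choice[OF this] obtain A where A: "\<And>n. A n \<in> pmul n L" "\<And>n. x - A n \<in> pmul (- n) N"
    by blast
  define n1 where "n1 = max n0 (- m)"
  have "pmul m N \<subseteq> pmul (- n1) N"
    unfolding n1_def by (intro pmul_antimono[OF N]) simp
  then have "x \<in> pmul (- n1) N"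
    using x(3) by blast
  then have "x - (x - A n1) \<in> pmul (- n1) N"
    by (rule submodule_diff[OF submodule_pmul[OF N] _ A(2)])
  then have "A n1 \<in> ?M"
    using A(1) by (intro mem_m_minus) simp_all
  then have "p *s A n1 \<in> ?M"
    by (rule submodule_scale[OF submodule_m_minus uniformizer_in_R])
  moreover have "p *s (x - A n1) \<in> ?M"
    using scale_uniformizer_telescope_mem_m_minus[OF L N A x(2)] by (simp add: n1_def)
  ultimately have "p *s A n1 + p *s (x - A n1) \<in> ?M"
    by (rule submodule_add[OF submodule_m_minus])
  then show ?thesis
    by (simp add: scale_right_distrib[symmetric])
qed

end

locale lattice_basis = dvr_vector_space R p scale
  for R :: "'k::field set" and p :: 'k and scale :: "'k \<Rightarrow> 'v::ab_group_add \<Rightarrow> 'v" +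
  fixes E :: "'v set"
  assumes finite_E: "finite E" and independent_E: "independent E" and span_E: "span E = UNIV"
begin

abbreviation coord :: "'v \<Rightarrow> 'v \<Rightarrow> 'k" where
  "coord \<equiv> representation E"

lemma in_span_E [simp]: "x \<in> span E"
  using span_E by simp

lemma coord_zero [simp]: "coord 0 e = 0"
  by (simp add: representation_zero)

lemma coord_add: "coord (x + y) e = coord x e + coord y e"
  by (simp add: representation_add[OF independent_E])

lemma coord_diff: "coord (x - y) e = coord x e - coord y e"
  by (simp add: representation_diff[OF independent_E])

lemma coord_scale: "coord (c *s x) e = c * coord x e"
  by (simp add: representation_scale[OF independent_E])

lemma coord_basis: "b \<in> E \<Longrightarrow> coord b e = (if e = b then 1 else 0)"
  by (simp add: representation_basis[OF independent_E])

lemma sum_coord_scale: "(\<Sum>e\<in>E. coord x e *s e) = x"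
  by (rule sum_representation_eq[OF independent_E in_span_E finite_E]) simp

lemma coord_lincomb: "T \<subseteq> E \<Longrightarrow> coord (\<Sum>b\<in>T. c b *s b) e = (if e \<in> T then c e else 0)"
proof -
  assume T: "T \<subseteq> E"
  then have "finite T"
    using finite_E finite_subset by blast
  then have "coord (\<Sum>b\<in>T. c b *s b) e = (\<Sum>b\<in>T. c b * coord b e)"
    by (simp add: representation_sum[OF independent_E] coord_scale)
  also have "\<dots> = (\<Sum>b\<in>T. if b = e then c b else 0)"
    using T by (intro sum.cong) (auto simp: coord_basis)
  also have "\<dots> = (if e \<in> T then c e else 0)"
    using \<open>finite T\<close> by (simp add: sum.delta)
  finally show ?thesis .
qed

lemma Rspan_E_eq: "Rspan scale R E = {x. \<forall>e\<in>E. coord x e \<in> R}"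
proof (intro set_eqI iffI)
  fix x assume "x \<in> Rspan scale R E"
  then show "x \<in> {x. \<forall>e\<in>E. coord x e \<in> R}"
    unfolding Rspan_def by (auto simp: coord_lincomb)
next
  fix x assume "x \<in> {x. \<forall>e\<in>E. coord x e \<in> R}"
  then show "x \<in> Rspan scale R E"
    unfolding Rspan_def using finite_E sum_coord_scale
    by (intro CollectI exI[of _ E] exI[of _ "coord x"]) auto
qed

lemma coord_eq_0_outside_span: "S \<subseteq> E \<Longrightarrow> y \<in> span S \<Longrightarrow> e \<in> E - S \<Longrightarrow> coord y e = 0"
proof -
  assume S: "S \<subseteq> E" and y: "y \<in> span S" and e: "e \<in> E - S"
  have "span S \<subseteq> {y. coord y e = 0}"
  proof (rule span_minimal)
    show "S \<subseteq> {y. coord y e = 0}"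
      using S e by (auto simp: coord_basis)
    show "subspace {y. coord y e = 0}"
      unfolding subspace_def by (auto simp: coord_add coord_scale)
  qed
  then show ?thesis
    using y by auto
qed

lemma in_span_if_coord_eq_0_outside: "S \<subseteq> E \<Longrightarrow> (\<forall>e\<in>E - S. coord y e = 0) \<Longrightarrow> y \<in> span S"
proof -
  assume S: "S \<subseteq> E" and y: "\<forall>e\<in>E - S. coord y e = 0"
  have "y = (\<Sum>e\<in>E. coord y e *s e)"
    by (simp add: sum_coord_scale)
  also have "\<dots> = (\<Sum>e\<in>S. coord y e *s e)"
    using S y finite_E by (intro sum.mono_neutral_cong_right) auto
  finally show ?thesis
    using S by (metis (no_types, lifting) span_base span_scale span_sum)
qed

lemma span_insert_leading:
  assumes S: "S \<subseteq> E" "e \<in> E - S" and C: "span C = span S"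
    and x: "x \<in> span (insert e S)" "coord x e \<noteq> 0"
  shows "span (insert x C) = span (insert e S)"
proof
  have "C \<subseteq> span (insert e S)"
    using C span_superset[of C] span_mono[of S "insert e S"] by blast
  then show "span (insert x C) \<subseteq> span (insert e S)"
    using x by (simp add: span_minimal subspace_span)
next
  define w where "w = x - coord x e *s e"
  have "\<forall>e'\<in>E - S. coord w e' = 0"
    using S x coord_eq_0_outside_span[of "insert e S" x]
    unfolding w_def by (auto simp: coord_diff coord_scale coord_basis)
  then have "w \<in> span C"
    using C S in_span_if_coord_eq_0_outside by blast
  then have "e = inverse (coord x e) *s (x - w)"
    using x(2) unfolding w_def by simp
  moreover have "x - w \<in> span (insert x C)"
    using \<open>w \<in> span C\<close> by (meson insertI1 span_base span_diff span_mono subsetD subset_insertI)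
  ultimately have "e \<in> span (insert x C)"
    by (metis span_scale)
  moreover have "S \<subseteq> span (insert x C)"
    using C span_superset[of S] span_mono[of C "insert x C"] by blast
  ultimately show "span (insert e S) \<subseteq> span (insert x C)"
    by (simp add: span_minimal subspace_span)
qed

lemma exists_power_scale_mem_Rspan_E: "\<exists>c::nat. p ^ c *s x \<in> Rspan scale R E"
proof -
  obtain c where "\<forall>e\<in>E. p ^ c * coord x e \<in> R"
    using uniform_power_mult_in_R[OF finite_E] by blast
  then show ?thesis
    by (auto simp: Rspan_E_eq coord_scale)
qed

text \<open>A submodule \<open>X\<close> commensurable with \<open>Rspan E\<close> gets a basis one coordinate at a time along
  the flag of subspaces spanned by growing subsets of \<open>E\<close>: at each step the new coordinates of
  the vectors of \<open>X\<close> in the subspace form a fractional ideal, which is principal, and a vector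
  whose coordinate generates it extends the basis.\<close>

context
  fixes X :: "'v set" and a :: int
  assumes submodule_X: "R_submodule scale R X"
    and lower: "pmul a (Rspan scale R E) \<subseteq> X" and upper: "pmul a X \<subseteq> Rspan scale R E"
begin

abbreviation flag :: "'v set \<Rightarrow> 'v set" where
  "flag S \<equiv> {x \<in> X. \<forall>e\<in>E - S. coord x e = 0}"

lemma submodule_flag: "R_submodule scale R (flag S)"
  using submodule_X unfolding R_submodule_def by (simp add: coord_add coord_scale)

lemma coord_image_principal:
  assumes "e \<in> E"
  shows "\<exists>g. (\<lambda>x. coord x e) ` flag T = (\<lambda>r. g * r) ` R"
  (is "\<exists>g. ?I = _")
proof (rule fractional_ideal_principal[where c = "p powi a"])
  have zero: "0 \<in> flag T"
    by (rule submodule_zero[OF submodule_flag])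
  show "0 \<in> ?I"
    by (rule image_eqI[OF _ zero]) simp
  show "\<forall>u\<in>?I. \<forall>v\<in>?I. u + v \<in> ?I"
  proof (intro ballI)
    fix u v assume "u \<in> ?I" "v \<in> ?I"
    then obtain x y where x: "x \<in> flag T" "u = coord x e"
      and y: "y \<in> flag T" "v = coord y e"
      by (auto elim!: imageE)
    have "x + y \<in> flag T"
      by (rule submodule_add[OF submodule_flag x(1) y(1)])
    then show "u + v \<in> ?I"
      by (rule image_eqI[rotated]) (simp add: x(2) y(2) coord_add)
  qed
  show "\<forall>r\<in>R. \<forall>u\<in>?I. r * u \<in> ?I"
  proof (intro ballI)
    fix r u assume r: "r \<in> R" and "u \<in> ?I"
    then obtain x where x: "x \<in> flag T" "u = coord x e"
      by (auto elim!: imageE)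
    have "r *s x \<in> flag T"
      by (rule submodule_scale[OF submodule_flag r x(1)])
    then show "r * u \<in> ?I"
      by (rule image_eqI[rotated]) (simp add: x(2) coord_scale)
  qed
  show "\<forall>u\<in>?I. p powi a * u \<in> R"
  proof (intro ballI)
    fix u assume "u \<in> ?I"
    then obtain x where x: "x \<in> flag T" "u = coord x e"
      by (auto elim!: imageE)
    then have "p powi a *s x \<in> Rspan scale R E"
      using upper by blast
    then show "p powi a * u \<in> R"
      using assms unfolding Rspan_E_eq x(2) by (simp add: coord_scale)
  qed
  show "p powi a \<noteq> 0"
    by simp
qed

lemma leading_coord_ideal:
  assumes "e \<in> E"
  shows "\<exists>g. g \<noteq> 0 \<and> (\<lambda>x. coord x e) ` flag (insert e S) = (\<lambda>r. g * r) ` R"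
proof -
  let ?I = "(\<lambda>x. coord x e) ` flag (insert e S)"
  obtain g where g: "?I = (\<lambda>r. g * r) ` R"
    using coord_image_principal[OF assms] by blast
  have "p powi a *s e \<in> pmul a (Rspan scale R E)"
    using Rspan_base[OF assms] by (rule imageI)
  then have "p powi a *s e \<in> X"
    using lower by blast
  then have "p powi a *s e \<in> flag (insert e S)"
    using assms by (simp add: coord_scale coord_basis)
  moreover have "p powi a = coord (p powi a *s e) e"
    using assms by (simp add: coord_scale coord_basis)
  ultimately have "p powi a \<in> ?I"
    by (simp only: image_eqI)
  then have "g \<noteq> 0"
    using g by (auto elim!: imageE)
  then show ?thesis
    using g by blast
qed

lemma Rspan_insert_leading:
  assumes S: "S \<subseteq> E" "e \<in> E - S" and C: "Rspan scale R C = flag S"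
    and x: "x \<in> flag (insert e S)"
    and gen: "(\<lambda>y. coord y e) ` flag (insert e S) = (\<lambda>r. coord x e * r) ` R"
  shows "Rspan scale R (insert x C) = flag (insert e S)"
proof
  have "flag S \<subseteq> flag (insert e S)"
    by auto
  then show "Rspan scale R (insert x C) \<subseteq> flag (insert e S)"
    using C x Rspan_base by (intro Rspan_least[OF submodule_flag]) blast
next
  show "flag (insert e S) \<subseteq> Rspan scale R (insert x C)"
  proof
    fix y assume y: "y \<in> flag (insert e S)"
    then obtain r where r: "r \<in> R" "coord y e = coord x e * r"
      using gen by blast
    have "y - r *s x \<in> X"
      using x y r submodule_X submodule_diff submodule_scale by blast
    moreover have "coord (y - r *s x) e' = 0" if "e' \<in> E - S" for e'
      using x y r that by (cases "e' = e") (auto simp: coord_diff coord_scale)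
    ultimately have "y - r *s x \<in> Rspan scale R (insert x C)"
      using C Rspan_mono[of C "insert x C"] by auto
    moreover have "r *s x \<in> Rspan scale R (insert x C)"
      using Rspan_base[of x "insert x C"] submodule_Rspan submodule_scale r by blast
    ultimately have "(y - r *s x) + r *s x \<in> Rspan scale R (insert x C)"
      using submodule_Rspan submodule_add by blast
    then show "y \<in> Rspan scale R (insert x C)"
      by simp
  qed
qed

lemma flag_has_basis:
  assumes "S \<subseteq> E"
  shows "\<exists>C. finite C \<and> independent C \<and> span C = span S \<and> Rspan scale R C = flag S"
  using finite_subset[OF assms finite_E] assms
proof (induction S rule: finite_subset_induct')
  case empty
  have "x = 0" if "x \<in> flag {}" for x
    using that sum_coord_scale[of x] by simp
  then have "flag {} = {0}"
    using submodule_zero[OF submodule_X] by auto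
  then show ?case
    by (intro exI[of _ "{}"]) (simp add: Rspan_empty independent_empty)
next
  case (insert e S)
  then obtain C where C: "finite C" "independent C" "span C = span S" "Rspan scale R C = flag S"
    by blast
  obtain g where g: "g \<noteq> 0" "(\<lambda>x. coord x e) ` flag (insert e S) = (\<lambda>r. g * r) ` R"
    using leading_coord_ideal \<open>e \<in> E\<close> by blast
  then obtain x where x: "x \<in> flag (insert e S)" "coord x e = g"
    by (metis (no_types, lifting) imageE image_eqI mult_1_right one_in_R)
  have x_span: "x \<in> span (insert e S)"
    using x insert by (intro in_span_if_coord_eq_0_outside) auto
  have "x \<notin> span S"
    using coord_eq_0_outside_span[of S x e] insert g x by auto
  moreover have "span (insert x C) = span (insert e S)"
    using span_insert_leading[of S e C x] C insert g x x_span by blast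
  moreover have "Rspan scale R (insert x C) = flag (insert e S)"
    using Rspan_insert_leading[of S e C x] C insert g x by blast
  ultimately show ?case
    using C by (intro exI[of _ "insert x C"]) (auto simp: independent_insertI)
qed

lemma is_lattice_commensurable: "is_lattice scale R X"
  using flag_has_basis[of E] span_E unfolding is_lattice_def by auto

end

end

context dvr_vector_space
begin

lemma lattice_basis_if_is_lattice:
  assumes "is_lattice scale R L"
  obtains E where "lattice_basis R p scale E" and "L = Rspan scale R E"
proof -
  obtain E where "finite E" "independent E" "span E = UNIV" "L = Rspan scale R E"
    using assms unfolding is_lattice_def by blast
  moreover from calculation have "lattice_basis R p scale E"
    by (intro lattice_basis.intro dvr_vector_space_axioms lattice_basis_axioms.intro)
  ultimately show thesis
    using that by blast
qed

lemma submodule_lattice: "is_lattice scale R L \<Longrightarrow> R_submodule scale R L"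
  by (metis is_lattice_def submodule_Rspan)

lemma commensurable_submodule_is_lattice:
  assumes "is_lattice scale R L" and "R_submodule scale R X"
    and "pmul a L \<subseteq> X" and "pmul a X \<subseteq> L"
  shows "is_lattice scale R X"
proof -
  obtain E where E: "lattice_basis R p scale E" and "L = Rspan scale R E"
    using assms(1) lattice_basis_if_is_lattice by blast
  with assms(2-4) show ?thesis
    by (intro lattice_basis.is_lattice_commensurable[OF E]) simp_all
qed

lemma exists_pmul_lattice_mem:
  assumes "is_lattice scale R L"
  shows "\<exists>n. x \<in> pmul n L"
proof -
  obtain E where E: "lattice_basis R p scale E" and "L = Rspan scale R E"
    using assms lattice_basis_if_is_lattice by blast
  then obtain c :: nat where "p ^ c *s x \<in> L"
    using lattice_basis.exists_power_scale_mem_Rspan_E[OF E] by blast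
  then have "p powi (- (- int c)) *s x \<in> L"
    by (simp add: power_int_of_nat)
  then show ?thesis
    unfolding pmul_iff[symmetric] by blast
qed

end

locale eps_symmetric_form = dvr_vector_space R p scale
  for R :: "'k::field set" and p :: 'k and scale :: "'k \<Rightarrow> 'v::ab_group_add \<Rightarrow> 'v" +
  fixes B :: "'v \<Rightarrow> 'v \<Rightarrow> 'k" and eps :: 'k
  assumes bilinear: "bilinear_form scale B" and nondegenerate: "nondegenerate B"
    and eps: "eps = 1 \<or> eps = -1" and eps_symmetric: "\<forall>x y. B x y = eps * B y x"
begin

abbreviation dual :: "'v set \<Rightarrow> 'v set" where
  "dual X \<equiv> dual_lattice B R X"

lemma B_add_left: "B (x + y) z = B x z + B y z"
  using bilinear by (simp add: bilinear_form_def)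

lemma B_add_right: "B x (y + z) = B x y + B x z"
  using bilinear by (simp add: bilinear_form_def)

lemma B_scale_left: "B (c *s x) y = c * B x y"
  using bilinear by (simp add: bilinear_form_def)

lemma B_scale_right: "B x (c *s y) = c * B x y"
  using bilinear by (simp add: bilinear_form_def)

lemma B_zero_left [simp]: "B 0 y = 0"
  using B_scale_left[of 0 0 y] by simp

lemma B_zero_right [simp]: "B x 0 = 0"
  using B_scale_right[of x 0 0] by simp

lemma B_sum_left: "B (sum f T) y = (\<Sum>i\<in>T. B (f i) y)"
  by (induction T rule: infinite_finite_induct) (auto simp: B_add_left)

lemma B_sum_right: "B x (sum f T) = (\<Sum>i\<in>T. B x (f i))"
  by (induction T rule: infinite_finite_induct) (auto simp: B_add_right)

lemma eps_in_R: "eps \<in> R"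
  using eps by auto

lemma B_swap_in_R: "B y x \<in> R \<Longrightarrow> B x y \<in> R"
proof -
  assume "B y x \<in> R"
  then have "eps * B y x \<in> R"
    using eps_in_R by (rule mult_in_R[rotated])
  then show "B x y \<in> R"
    by (subst eps_symmetric[rule_format])
qed

lemma subset_dual_iff: "X \<subseteq> dual Y \<longleftrightarrow> Y \<subseteq> dual X"
  unfolding dual_lattice_def using B_swap_in_R by blast

lemma dual_antimono: "X \<subseteq> Y \<Longrightarrow> dual Y \<subseteq> dual X"
  unfolding dual_lattice_def by blast

lemma submodule_dual: "R_submodule scale R (dual X)"
  unfolding R_submodule_def dual_lattice_def by (auto simp: B_add_left B_scale_left)

lemma dual_Rspan: "dual (Rspan scale R U) = dual U"
proof
  show "dual (Rspan scale R U) \<subseteq> dual U"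
    using Rspan_base by (intro dual_antimono) blast
  have "Rspan scale R U \<subseteq> dual (dual U)"
    using subset_dual_iff by (intro Rspan_least submodule_dual) blast
  then show "dual U \<subseteq> dual (Rspan scale R U)"
    using subset_dual_iff by blast
qed

lemma dual_pmul: "dual (pmul n X) = pmul (- n) (dual X)"
proof -
  have "z \<in> dual (pmul n X) \<longleftrightarrow> p powi n *s z \<in> dual X" for z
    unfolding dual_lattice_def by (auto simp: B_scale_left B_scale_right)
  then show ?thesis
    using pmul_iff[of _ "- n"] by auto
qed

lemma dual_set_plus:
  assumes "0 \<in> X" and "0 \<in> Z"
  shows "dual {a + b |a b. a \<in> X \<and> b \<in> Z} = dual X \<inter> dual Z"
proof
  show "dual {a + b |a b. a \<in> X \<and> b \<in> Z} \<subseteq> dual X \<inter> dual Z"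
    using assms by (intro Int_greatest dual_antimono) force+
  show "dual X \<inter> dual Z \<subseteq> dual {a + b |a b. a \<in> X \<and> b \<in> Z}"
    unfolding dual_lattice_def by (auto simp: B_add_right intro!: add_in_R)
qed

lemma pmul_subset_dual_pmul: "N \<subseteq> dual L \<Longrightarrow> pmul (- n) N \<subseteq> dual (pmul n L)"
  unfolding dual_pmul by (rule pmul_mono)

lemma m_minus_generators_pairing:
  assumes N: "R_submodule scale R N" and NL: "N \<subseteq> dual L"
    and u: "u \<in> pmul n L" "u \<in> pmul (- n) N" and w: "w \<in> pmul m L" "w \<in> pmul (- m) N"
  shows "B u w \<in> R"
proof (cases "m \<le> n")
  case True
  then have "w \<in> pmul (- n) N"
    using pmul_antimono[OF N, of "- n" "- m"] w(2) by auto
  then have "w \<in> dual (pmul n L)"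
    using pmul_subset_dual_pmul[OF NL] by blast
  then show ?thesis
    using u(1) B_swap_in_R unfolding dual_lattice_def by blast
next
  case False
  then have "u \<in> pmul (- m) N"
    using pmul_antimono[OF N, of "- m" "- n"] u(2) by auto
  then have "u \<in> dual (pmul m L)"
    using pmul_subset_dual_pmul[OF NL] by blast
  then show ?thesis
    using w(1) unfolding dual_lattice_def by blast
qed

lemma m_minus_subset_dual:
  assumes "R_submodule scale R N" and "N \<subseteq> dual L"
  shows "m_minus scale R p L N \<subseteq> dual (m_minus scale R p L N)"
  unfolding m_minus_def dual_Rspan
proof (rule Rspan_least[OF submodule_dual])
  show "(\<Union>n. pmul n L \<inter> pmul (- n) N) \<subseteq> dual (\<Union>n. pmul n L \<inter> pmul (- n) N)"
    unfolding dual_lattice_def using m_minus_generators_pairing[OF assms] by blast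
qed

lemma m_plus_subset_dual_m_minus:
  assumes NL: "N \<subseteq> dual L"
  shows "m_plus scale p L N \<subseteq> dual (m_minus scale R p L N)"
  unfolding m_minus_def dual_Rspan
proof
  fix x assume x: "x \<in> m_plus scale p L N"
  have "B x u \<in> R" if "u \<in> pmul n L" "u \<in> pmul (- n) N" for u n
  proof -
    obtain a where a: "a \<in> pmul n L" "x - a \<in> pmul (- n) N"
      using x unfolding m_plus_iff by blast
    have "B u a \<in> R" and "B (x - a) u \<in> R"
      using a that pmul_subset_dual_pmul[OF NL] unfolding dual_lattice_def by blast+
    then have "B a u + B (x - a) u \<in> R"
      using B_swap_in_R by blast
    then show ?thesis
      by (simp add: B_add_left[symmetric])
  qed
  then show "x \<in> dual (\<Union>n. pmul n L \<inter> pmul (- n) N)"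
    unfolding dual_lattice_def by blast
qed

end

locale form_lattice_basis =
  eps_symmetric_form R p scale B eps + lattice_basis R p scale E
  for R :: "'k::field set" and p :: 'k and scale :: "'k \<Rightarrow> 'v::ab_group_add \<Rightarrow> 'v"
    and B :: "'v \<Rightarrow> 'v \<Rightarrow> 'k" and eps :: 'k and E :: "'v set"
begin

lemma B_expand_left: "B x y = (\<Sum>e\<in>E. coord x e * B e y)"
  by (subst sum_coord_scale[symmetric, of x]) (simp add: B_sum_left B_scale_left)

lemma B_expand_right: "B x y = (\<Sum>e\<in>E. coord y e * B x e)"
  by (subst sum_coord_scale[symmetric, of y]) (simp add: B_sum_right B_scale_right)

lemma exists_dual_basis: "\<exists>f. \<forall>e\<in>E. \<forall>e'\<in>E. B (f e) e' = (if e' = e then 1 else 0)"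
proof -
  interpret finite_dimensional_vector_space scale E
    by unfold_locales (use finite_E independent_E span_E in auto)
  define T where "T x = (\<Sum>e\<in>E. B x e *s e)" for x
  have coord_T: "coord (T x) e' = (if e' \<in> E then B x e' else 0)" for x e'
    unfolding T_def by (simp add: coord_lincomb)
  have "Vector_Spaces.linear scale scale T"
    apply (rule linear_module_homI)
    unfolding module_hom_iff using module_axioms
    by (auto simp: T_def B_add_left B_scale_left scale_left_distrib sum.distrib scale_sum_right)
  moreover have "inj T"
  proof (rule injI)
    fix x y assume "T x = T y"
    then have "\<forall>e\<in>E. B x e = B y e"
      using coord_T by metis
    then have "B x z = B y z" for z
      using B_expand_right[of x z] B_expand_right[of y z] by (metis (no_types, lifting) sum.cong)
    moreover have "B (x - y) z = B x z - B y z" for z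
      using B_add_left[of "x - y" y z] by simp
    ultimately have "\<forall>z. B (x - y) z = 0"
      by simp
    then show "x = y"
      using nondegenerate unfolding nondegenerate_def by auto
  qed
  ultimately have "surj T"
    using linear_inj_imp_surj by blast
  then obtain f where f: "\<And>e. T (f e) = e"
    by (metis surjD)
  have "B (f e) e' = (if e' = e then 1 else 0)" if "e \<in> E" "e' \<in> E" for e e'
    using coord_T[of "f e" e'] f[of e] that by (simp add: coord_basis)
  then show ?thesis
    by blast
qed

lemma dual_basis_pairing:
  assumes f: "\<forall>e\<in>E. \<forall>e'\<in>E. B (f e) e' = (if e' = e then 1 else 0)" and e: "e \<in> E"
  shows "B (f e) x = coord x e"
proof -
  have "B (f e) x = (\<Sum>e'\<in>E. if e' = e then coord x e' else 0)"
    unfolding B_expand_right[of "f e" x] using f e by (intro sum.cong) auto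
  also have "\<dots> = coord x e"
    using finite_E e by (simp add: sum.delta')
  finally show ?thesis .
qed

lemma dual_dual_Rspan_E_subset: "dual (dual (Rspan scale R E)) \<subseteq> Rspan scale R E"
proof
  obtain f where f: "\<forall>e\<in>E. \<forall>e'\<in>E. B (f e) e' = (if e' = e then 1 else 0)"
    using exists_dual_basis by blast
  fix x assume x: "x \<in> dual (dual (Rspan scale R E))"
  have "f e \<in> dual (Rspan scale R E)" if "e \<in> E" for e
    unfolding dual_lattice_def using dual_basis_pairing[OF f that] that
    by (auto simp: Rspan_E_eq)
  then have "B (f e) x \<in> R" if "e \<in> E" for e
    using x that B_swap_in_R unfolding dual_lattice_def by blast
  then show "x \<in> Rspan scale R E"
    using dual_basis_pairing[OF f] by (auto simp: Rspan_E_eq)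
qed

lemma exists_pmul_Rspan_E_subset_dual: "\<exists>c\<ge>0. pmul c (Rspan scale R E) \<subseteq> dual (Rspan scale R E)"
proof -
  obtain c where c: "\<forall>(e, e')\<in>E \<times> E. p ^ c * B e e' \<in> R"
    using uniform_power_mult_in_R[of "E \<times> E" "\<lambda>(e, e'). B e e'"] finite_E
    by (auto simp: case_prod_beta)
  have "p ^ c *s x \<in> dual E" if "x \<in> Rspan scale R E" for x
  proof -
    have "B (p ^ c *s x) e' \<in> R" if "e' \<in> E" for e'
    proof -
      have "B (p ^ c *s x) e' = (\<Sum>e\<in>E. coord x e * (p ^ c * B e e'))"
        by (simp add: B_scale_left B_expand_left[of x] sum_distrib_left mult.left_commute)
      then show ?thesis
        using c \<open>x \<in> Rspan scale R E\<close> that by (auto simp: Rspan_E_eq intro!: sum_in_R)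
    qed
    then show ?thesis
      unfolding dual_lattice_def by blast
  qed
  then show ?thesis
    by (intro exI[of _ "int c"]) (auto simp: dual_Rspan power_int_of_nat)
qed

lemma exists_pmul_dual_subset_Rspan_E: "\<exists>c\<ge>0. pmul c (dual (Rspan scale R E)) \<subseteq> Rspan scale R E"
proof -
  obtain f where f: "\<forall>e\<in>E. \<forall>e'\<in>E. B (f e) e' = (if e' = e then 1 else 0)"
    using exists_dual_basis by blast
  obtain c where "\<forall>(e, e')\<in>E \<times> E. p ^ c * coord (f e) e' \<in> R"
    using uniform_power_mult_in_R[of "E \<times> E" "\<lambda>(e, e'). coord (f e) e'"] finite_E
    by (auto simp: case_prod_beta)
  then have c: "\<forall>e\<in>E. p ^ c *s f e \<in> Rspan scale R E"
    by (auto simp: Rspan_E_eq coord_scale)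
  have "p ^ c *s x \<in> Rspan scale R E" if x: "x \<in> dual (Rspan scale R E)" for x
  proof -
    have "coord (p ^ c *s x) e \<in> R" if e: "e \<in> E" for e
    proof -
      have "B x (p ^ c *s f e) \<in> R"
        using x c e unfolding dual_lattice_def by blast
      then have "B (p ^ c *s f e) x \<in> R"
        by (rule B_swap_in_R)
      then show ?thesis
        using dual_basis_pairing[OF f e] by (simp add: B_scale_left coord_scale)
    qed
    then show ?thesis
      by (simp add: Rspan_E_eq)
  qed
  then show ?thesis
    by (intro exI[of _ "int c"]) (auto simp: power_int_of_nat)
qed

end

context eps_symmetric_form
begin

lemma form_lattice_basis_if_is_lattice:
  assumes "is_lattice scale R L"
  obtains E where "form_lattice_basis R p scale B eps E" and "L = Rspan scale R E"
proof -
  obtain E where "lattice_basis R p scale E" and "L = Rspan scale R E"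
    using assms lattice_basis_if_is_lattice by blast
  moreover from calculation have "form_lattice_basis R p scale B eps E"
    by (intro form_lattice_basis.intro eps_symmetric_form_axioms)
      (simp add: lattice_basis_def)
  ultimately show thesis
    using that by blast
qed

lemma dual_dual_lattice:
  assumes "is_lattice scale R L"
  shows "dual (dual L) = L"
proof
  obtain E where E: "form_lattice_basis R p scale B eps E" and "L = Rspan scale R E"
    using assms form_lattice_basis_if_is_lattice by blast
  then show "dual (dual L) \<subseteq> L"
    using form_lattice_basis.dual_dual_Rspan_E_subset[OF E] by simp
  show "L \<subseteq> dual (dual L)"
    using subset_dual_iff by blast
qed

lemma exists_pmul_lattice_subset_dual:
  assumes "is_lattice scale R L"
  shows "\<exists>c\<ge>0. pmul c L \<subseteq> dual L"
proof -
  obtain E where E: "form_lattice_basis R p scale B eps E" and "L = Rspan scale R E"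
    using assms form_lattice_basis_if_is_lattice by blast
  then show ?thesis
    using form_lattice_basis.exists_pmul_Rspan_E_subset_dual[OF E] by simp
qed

lemma exists_dual_subset_pmul_lattice:
  assumes "is_lattice scale R L"
  shows "\<exists>c\<ge>0. dual L \<subseteq> pmul (- c) L"
proof -
  obtain E where E: "form_lattice_basis R p scale B eps E" and "L = Rspan scale R E"
    using assms form_lattice_basis_if_is_lattice by blast
  then show ?thesis
    using form_lattice_basis.exists_pmul_dual_subset_Rspan_E[OF E] by (simp add: pmul_subset_iff)
qed

context
  fixes L :: "'v set"
  assumes lattice: "is_lattice scale R L"
begin

lemma submodule_L: "R_submodule scale R L"
  using lattice by (rule submodule_lattice)

abbreviation m_plus_term :: "int \<Rightarrow> 'v set" where
  "m_plus_term k \<equiv> {a + b |a b. a \<in> pmul k L \<and> b \<in> pmul (- k) (dual L)}"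

lemma m_plus_term_is_lattice:
  "is_lattice scale R (m_plus_term k)"
proof -
  obtain c where c: "c \<ge> 0" "dual L \<subseteq> pmul (- c) L"
    using exists_dual_subset_pmul_lattice[OF lattice] by blast
  define d where "d = \<bar>k\<bar> + c"
  show ?thesis
  proof (rule commensurable_submodule_is_lattice[OF lattice])
    show "R_submodule scale R (m_plus_term k)"
      by (intro submodule_set_plus submodule_pmul submodule_L submodule_dual)
    have "pmul d L \<subseteq> pmul k L"
      unfolding d_def using c by (intro pmul_antimono[OF submodule_L]) simp
    then show "pmul d L \<subseteq> m_plus_term k"
      using submodule_zero[OF submodule_pmul[OF submodule_dual]] by force
    have L_part: "pmul d (pmul k L) \<subseteq> L"
      unfolding pmul_pmul d_def
      using pmul_antimono[OF submodule_L, of 0 "\<bar>k\<bar> + c + k"] c by simp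
    have "pmul (d - k) (dual L) \<subseteq> pmul (d - k) (pmul (- c) L)"
      using c(2) by (rule pmul_mono)
    then have "pmul d (pmul (- k) (dual L)) \<subseteq> pmul (d - k - c) L"
      by (simp add: pmul_pmul)
    moreover have "pmul (d - k - c) L \<subseteq> L"
      using pmul_antimono[OF submodule_L, of 0 "d - k - c"] unfolding d_def by simp
    ultimately have "pmul d (pmul (- k) (dual L)) \<subseteq> L"
      by (rule order_trans)
    then show "pmul d (m_plus_term k) \<subseteq> L"
      using L_part by (intro pmul_set_plus_subset submodule_L)
  qed
qed

lemma dual_m_plus_term:
  "dual (m_plus_term k) = pmul k L \<inter> pmul (- k) (dual L)"
proof -
  have "dual (m_plus_term k) = dual (pmul k L) \<inter> dual (pmul (- k) (dual L))"
    by (intro dual_set_plus submodule_zero submodule_pmul submodule_L submodule_dual)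
  then show ?thesis
    by (auto simp: dual_pmul dual_dual_lattice[OF lattice])
qed

lemma dual_m_minus_subset_m_plus:
  "dual (m_minus scale R p L (dual L)) \<subseteq> m_plus scale p L (dual L)"
proof -
  have "dual (m_minus scale R p L (dual L)) \<subseteq> m_plus_term k" for k
  proof -
    have "dual (m_plus_term k) \<subseteq> m_minus scale R p L (dual L)"
      unfolding dual_m_plus_term using mem_m_minus by blast
    then have "dual (m_minus scale R p L (dual L)) \<subseteq> dual (dual (m_plus_term k))"
      by (rule dual_antimono)
    then show ?thesis
      using dual_dual_lattice[OF m_plus_term_is_lattice] by simp
  qed
  then show ?thesis
    unfolding m_plus_def by blast
qed

lemma dual_m_minus_eq_m_plus:
  "dual (m_minus scale R p L (dual L)) = m_plus scale p L (dual L)"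
  using dual_m_minus_subset_m_plus m_plus_subset_dual_m_minus[of "dual L" L] by blast

lemma scale_uniformizer_dual_m_minus_subset:
  "scale p ` dual (m_minus scale R p L (dual L)) \<subseteq> m_minus scale R p L (dual L)"
proof
  fix y assume "y \<in> scale p ` dual (m_minus scale R p L (dual L))"
  then obtain x where x: "x \<in> m_plus scale p L (dual L)" and y: "y = p *s x"
    unfolding dual_m_minus_eq_m_plus by blast
  obtain n where n: "x \<in> pmul n L"
    using exists_pmul_lattice_mem[OF lattice] by blast
  obtain c where "pmul c L \<subseteq> dual L"
    using exists_pmul_lattice_subset_dual[OF lattice] by blast
  then have "pmul (n - c) (pmul c L) \<subseteq> pmul (n - c) (dual L)"
    by (rule pmul_mono)
  then have "pmul n L \<subseteq> pmul (n - c) (dual L)"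
    by (simp add: pmul_pmul)
  then have "x \<in> pmul (n - c) (dual L)"
    using n by blast
  then show "y \<in> m_minus scale R p L (dual L)"
    unfolding y using scale_uniformizer_m_plus_mem_m_minus[OF submodule_L submodule_dual x n]
    by blast
qed

lemma m_minus_subset_pmul_lattice:
  assumes c: "c \<ge> 0" "dual L \<subseteq> pmul (- c) L" and d: "c \<le> d"
  shows "m_minus scale R p L (dual L) \<subseteq> pmul (- d) L"
proof -
  have "pmul n L \<inter> pmul (- n) (dual L) \<subseteq> pmul (- d) L" for n
  proof (cases "- d \<le> n")
    case True
    then show ?thesis
      using pmul_antimono[OF submodule_L True] by blast
  next
    case False
    have "pmul (- n) (dual L) \<subseteq> pmul (- n) (pmul (- c) L)"
      using c(2) by (rule pmul_mono)
    also have "\<dots> \<subseteq> pmul (- d) L"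
      unfolding pmul_pmul using False c d by (intro pmul_antimono[OF submodule_L]) simp
    finally show ?thesis
      by blast
  qed
  then show ?thesis
    unfolding m_minus_def by (intro Rspan_least submodule_pmul submodule_L) blast
qed

lemma m_minus_is_lattice: "is_lattice scale R (m_minus scale R p L (dual L))"
proof -
  obtain c1 where c1: "c1 \<ge> 0" "pmul c1 L \<subseteq> dual L"
    using exists_pmul_lattice_subset_dual[OF lattice] by blast
  obtain c2 where c2: "c2 \<ge> 0" "dual L \<subseteq> pmul (- c2) L"
    using exists_dual_subset_pmul_lattice[OF lattice] by blast
  define d where "d = c1 + c2"
  show ?thesis
  proof (rule commensurable_submodule_is_lattice[OF lattice submodule_m_minus])
    have "pmul d L \<subseteq> pmul 0 L" and "pmul d L \<subseteq> pmul c1 L"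
      unfolding d_def using c1 c2 by (intro pmul_antimono[OF submodule_L]; simp)+
    then show "pmul d L \<subseteq> m_minus scale R p L (dual L)"
      using c1(2) mem_m_minus[of _ 0 L "dual L"] by auto
    have "m_minus scale R p L (dual L) \<subseteq> pmul (- d) L"
      using c1 unfolding d_def by (intro m_minus_subset_pmul_lattice[OF c2]) simp
    then show "pmul d (m_minus scale R p L (dual L)) \<subseteq> L"
      unfolding pmul_subset_iff by simp
  qed
qed

end

end

theorem theorem3p1p1:
  fixes R :: "'k::field set" and p :: 'k and eps :: 'k
    and scale :: "'k \<Rightarrow> 'v::ab_group_add \<Rightarrow> 'v"
    and B :: "'v \<Rightarrow> 'v \<Rightarrow> 'k" and L :: "'v set"
  assumes "dvr R" and "fraction_field_is_UNIV R" and "uniformizer R p"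
    and "vector_space scale"
    and "\<exists>S. finite S \<and> module.span scale S = UNIV"
    and "bilinear_form scale B" and "nondegenerate B"
    and "eps = 1 \<or> eps = -1" and "\<forall>x y. B x y = eps * B y x"
    and "is_lattice scale R L"
  shows "almost_self_dual scale B R p (m_minus scale R p L (dual_lattice B R L))
    \<and> dual_lattice B R (m_minus scale R p L (dual_lattice B R L))
        = m_plus scale p L (dual_lattice B R L)"
proof -
  interpret eps_symmetric_form R p scale B eps
    using assms(1-4,6-9)
    by (intro eps_symmetric_form.intro dvr_vector_space.intro dvr_fraction_field.intro
        eps_symmetric_form_axioms.intro)
  show ?thesis
    unfolding almost_self_dual_def
    using m_minus_is_lattice scale_uniformizer_dual_m_minus_subset
      m_minus_subset_dual[OF submodule_dual order_refl] dual_m_minus_eq_m_plus assms(10)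
    by blast
qed

end
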